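(* The $K_3$-WORM feasible sets of $K_3$-WORM-colorable graphs may contain arbitrarily large gaps: for every positive integer $m$ there exist a $K_3$-WORM-colorable graph $G$ and an integer $a$ such that $W^-(G,K_3)<a$, $a+m-1<W^+(G,K_3)$, and none of $a,a+1,\dots,a+m-1$ belongs to $\Phi_W(G,K_3)$.
   Context: A $K_3$-WORM coloring of a graph $G$ is an assignment of colors to the vertices of $G$ such that the three vertices of every triangle of $G$ receive exactly two distinct colors. $G$ is $K_3$-WORM-colorable if it has such a coloring; then $W^-(G,K_3)$ and $W^+(G,K_3)$ are the minimum and maximum number of colors used in a $K_3$-WORM coloring of $G$, and the feasible set $\Phi_W(G,K_3)$ is the set of integers $s$ such that $G$ has a $K_3$-WORM coloring using exactly $s$ colors. $G$ has a gap at $k$ if $W^-(G,K_3)<k<W^+(G,K_3)$ and $k\notin\Phi_W(G,K_3)$. *)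

theory Defs
  imports Main
begin

definition simple_graph :: "'a set \<Rightarrow> ('a \<Rightarrow> 'a \<Rightarrow> bool) \<Rightarrow> bool" where
  "simple_graph V E \<longleftrightarrow> finite V \<and> (\<forall>u v. E u v \<longrightarrow> u \<in> V \<and> v \<in> V) \<and>
     (\<forall>u v. E u v \<longrightarrow> E v u) \<and> (\<forall>v. \<not> E v v)"

definition triangle :: "('a \<Rightarrow> 'a \<Rightarrow> bool) \<Rightarrow> 'a \<Rightarrow> 'a \<Rightarrow> 'a \<Rightarrow> bool" where
  "triangle E x y z \<longleftrightarrow> E x y \<and> E y z \<and> E x z"

definition worm_coloring :: "'a set \<Rightarrow> ('a \<Rightarrow> 'a \<Rightarrow> bool) \<Rightarrow> ('a \<Rightarrow> nat) \<Rightarrow> bool" where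
  "worm_coloring V E c \<longleftrightarrow>
     (\<forall>x y z. triangle E x y z \<longrightarrow> card {c x, c y, c z} = 2)"

definition num_colors :: "'a set \<Rightarrow> ('a \<Rightarrow> nat) \<Rightarrow> nat" where
  "num_colors V c = card (c ` V)"

definition worm_colorable :: "'a set \<Rightarrow> ('a \<Rightarrow> 'a \<Rightarrow> bool) \<Rightarrow> bool" where
  "worm_colorable V E \<longleftrightarrow> (\<exists>c. worm_coloring V E c)"

definition worm_feasible :: "'a set \<Rightarrow> ('a \<Rightarrow> 'a \<Rightarrow> bool) \<Rightarrow> nat set" where
  "worm_feasible V E = {s. \<exists>c. worm_coloring V E c \<and> num_colors V c = s}"

definition worm_min :: "'a set \<Rightarrow> ('a \<Rightarrow> 'a \<Rightarrow> bool) \<Rightarrow> nat" where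
  "worm_min V E = Min (worm_feasible V E)"

definition worm_max :: "'a set \<Rightarrow> ('a \<Rightarrow> 'a \<Rightarrow> bool) \<Rightarrow> nat" where
  "worm_max V E = Max (worm_feasible V E)"

end

theory Submission imports Defs "HOL-Library.Countable" begin

text \<open>Two adjacent hubs X, Y; for every j < N a K4 on A j, B j, C j, D j whose edge
  A j B j forms triangles with both hubs; and for i < j a vertex Z i j adjacent to
  A i, B i, A j, C j, D j. If the hubs get different colours, every vertex is forced into
  their two colours. If they share a colour, each pair A j, B j is monochromatic in a new
  colour, and Z i j is forced to carry the colour of A j while being adjacent to the
  monochromatic edge A i B i; hence the N pairs use N distinct colours besides that of the
  hubs. So no coloring uses between 3 and N colours, while both extremes are realised.\<close>

lemma card_three_eq_two_iff:
  "card {a, b, c} = 2 \<longleftrightarrow> (a = b \<and> b \<noteq> c) \<or> (a \<noteq> b \<and> (a = c \<or> b = c))"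
  by (auto simp: card_insert_if)

(* Qualified: Countable brings Nat_Bijection.triangle into scope. *)
lemma worm_coloring_triangle:
  assumes "worm_coloring V E c" "E x y" "E y z" "E x z"
  shows "(c x = c y \<and> c y \<noteq> c z) \<or> (c x \<noteq> c y \<and> (c x = c z \<or> c y = c z))"
  using assms unfolding worm_coloring_def Defs.triangle_def card_three_eq_two_iff by blast

lemma worm_colorable_iff_feasible_nonempty:
  "worm_colorable V E \<longleftrightarrow> worm_feasible V E \<noteq> {}"
  unfolding worm_colorable_def worm_feasible_def by blast

lemma finite_worm_feasible:
  assumes "finite V"
  shows "finite (worm_feasible V E)"
proof (rule finite_subset)
  show "worm_feasible V E \<subseteq> {..card V}"
    using card_image_le[OF assms] by (auto simp: worm_feasible_def num_colors_def)
qed simp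

definition map_edges :: "('a \<Rightarrow> 'b) \<Rightarrow> ('a \<Rightarrow> 'a \<Rightarrow> bool) \<Rightarrow> 'b \<Rightarrow> 'b \<Rightarrow> bool" where
  "map_edges f E u v \<longleftrightarrow> (\<exists>x y. u = f x \<and> v = f y \<and> E x y)"

lemma simple_graph_map_edges:
  assumes "inj f" "simple_graph V E"
  shows "simple_graph (f ` V) (map_edges f E)"
  using assms unfolding simple_graph_def map_edges_def by (auto 0 4 dest: injD)

lemma triangle_map_edges:
  assumes "inj f"
  shows "Defs.triangle (map_edges f E) u v w \<longleftrightarrow>
    (\<exists>x y z. u = f x \<and> v = f y \<and> w = f z \<and> Defs.triangle E x y z)"
  unfolding Defs.triangle_def map_edges_def using injD[OF assms] by blast

lemma worm_coloring_map_edges: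
  assumes "inj f"
  shows "worm_coloring (f ` V) (map_edges f E) c \<longleftrightarrow> worm_coloring V E (c \<circ> f)"
  unfolding worm_coloring_def triangle_map_edges[OF assms] by (auto; blast)

lemma worm_feasible_map_edges:
  assumes "inj f"
  shows "worm_feasible (f ` V) (map_edges f E) = worm_feasible V E"
proof -
  have colors: "num_colors (f ` V) c = num_colors V (c \<circ> f)" for c :: "_ \<Rightarrow> nat"
    by (simp add: num_colors_def image_comp)
  have "c \<circ> inv f \<circ> f = c" for c :: "_ \<Rightarrow> nat"
    using assms by (simp add: fun_eq_iff)
  then have "(\<exists>c. worm_coloring V E (c \<circ> f) \<and> num_colors V (c \<circ> f) = s) \<longleftrightarrow>
      (\<exists>c. worm_coloring V E c \<and> num_colors V c = s)" for s
    by metis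
  then show ?thesis
    unfolding worm_feasible_def worm_coloring_map_edges[OF assms] colors by blast
qed

datatype vertex = X | Y | A nat | B nat | C nat | D nat | Z nat nat

instance vertex :: countable by countable_datatype

fun gap_edge :: "nat \<Rightarrow> vertex \<Rightarrow> vertex \<Rightarrow> bool" where
  "gap_edge N X Y = True"
| "gap_edge N X (A j) = (j < N)"
| "gap_edge N X (B j) = (j < N)"
| "gap_edge N Y (A j) = (j < N)"
| "gap_edge N Y (B j) = (j < N)"
| "gap_edge N (A i) (B j) = (i = j \<and> j < N)"
| "gap_edge N (A i) (C j) = (i = j \<and> j < N)"
| "gap_edge N (A i) (D j) = (i = j \<and> j < N)"
| "gap_edge N (B i) (C j) = (i = j \<and> j < N)"
| "gap_edge N (B i) (D j) = (i = j \<and> j < N)"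
| "gap_edge N (C i) (D j) = (i = j \<and> j < N)"
| "gap_edge N (Z i j) (A k) = (i < j \<and> j < N \<and> (k = i \<or> k = j))"
| "gap_edge N (Z i j) (B k) = (i < j \<and> j < N \<and> k = i)"
| "gap_edge N (Z i j) (C k) = (i < j \<and> j < N \<and> k = j)"
| "gap_edge N (Z i j) (D k) = (i < j \<and> j < N \<and> k = j)"
| "gap_edge N _ _ = False"

definition gap_adj :: "nat \<Rightarrow> vertex \<Rightarrow> vertex \<Rightarrow> bool" where
  "gap_adj N u v \<longleftrightarrow> gap_edge N u v \<or> gap_edge N v u"

definition gap_vertices :: "nat \<Rightarrow> vertex set" where
  "gap_vertices N = {X, Y} \<union> A ` {..<N} \<union> B ` {..<N} \<union> C ` {..<N} \<union> D ` {..<N}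
     \<union> case_prod Z ` {(i, j). i < j \<and> j < N}"

lemma finite_gap_vertices: "finite (gap_vertices N)"
proof -
  have "{(i, j). i < j \<and> j < N} \<subseteq> {..<N} \<times> {..<N}" by auto
  then have "finite {(i, j). i < j \<and> j < (N::nat)}" by (rule finite_subset) auto
  then show ?thesis unfolding gap_vertices_def by auto
qed

lemma simple_graph_gap: "simple_graph (gap_vertices N) (gap_adj N)"
proof -
  have "gap_edge N u v \<Longrightarrow> u \<in> gap_vertices N \<and> v \<in> gap_vertices N" for u v
    by (cases u; cases v) (auto simp: gap_vertices_def)
  moreover have "\<not> gap_edge N v v" for v
    by (cases v) auto
  ultimately show ?thesis
    using finite_gap_vertices by (auto simp: simple_graph_def gap_adj_def)
qed

lemma hub_colors_distinct_two_colors: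
  assumes w: "worm_coloring V (gap_adj N) c" and ne: "c X \<noteq> c Y"
  shows "c ` gap_vertices N \<subseteq> {c X, c Y}"
proof -
  note tri = worm_coloring_triangle[OF w]
  have AB: "c (A j) \<in> {c X, c Y} \<and> c (B j) \<in> {c X, c Y} \<and> c (A j) \<noteq> c (B j)" if "j < N" for j
  proof -
    have A: "c (A j) \<in> {c X, c Y}" and "c (B j) \<in> {c X, c Y}"
      using tri[of X Y "A j"] tri[of X Y "B j"] that ne by (auto simp: gap_adj_def)
    moreover have "c (A j) \<noteq> c (B j)"
      using tri[of X "A j" "B j"] tri[of Y "A j" "B j"] that A by (auto simp: gap_adj_def)
    ultimately show ?thesis by blast
  qed
  have CD: "c (C j) \<in> {c X, c Y} \<and> c (D j) \<in> {c X, c Y}" if "j < N" for j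
    using AB[OF that] tri[of "A j" "B j" "C j"] tri[of "A j" "B j" "D j"] that
    by (auto simp: gap_adj_def)
  have Z: "c (Z i j) \<in> {c X, c Y}" if "i < j" "j < N" for i j
    using AB[of i] tri[of "Z i j" "A i" "B i"] that by (auto simp: gap_adj_def)
  show ?thesis unfolding gap_vertices_def using AB CD Z by auto
qed

lemma hub_colors_equal_pair:
  assumes w: "worm_coloring V (gap_adj N) c" and eq: "c X = c Y" and j: "j < N"
  shows "c (A j) \<noteq> c X \<and> c (A j) = c (B j)"
proof -
  note tri = worm_coloring_triangle[OF w]
  have "c (A j) \<noteq> c X" "c (B j) \<noteq> c X"
    using tri[of X Y "A j"] tri[of X Y "B j"] j eq by (auto simp: gap_adj_def)
  then show ?thesis
    using tri[of X "A j" "B j"] j by (auto simp: gap_adj_def)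
qed

text \<open>Z i j inherits the colour of A j via the K4 on A j .. D j, but must differ from the
  common colour of A i and B i.\<close>
lemma hub_colors_equal_pairs_distinct:
  assumes w: "worm_coloring V (gap_adj N) c" and eq: "c X = c Y" and ij: "i < j" "j < N"
  shows "c (A i) \<noteq> c (A j)"
proof -
  note tri = worm_coloring_triangle[OF w] and pair = hub_colors_equal_pair[OF w eq]
  have C: "c (C j) \<noteq> c (A j)" and "c (D j) \<noteq> c (A j)"
    using pair[OF ij(2)] tri[of "A j" "B j" "C j"] tri[of "A j" "B j" "D j"] ij
    by (auto simp: gap_adj_def)
  then have "c (C j) = c (D j)"
    using tri[of "A j" "C j" "D j"] ij by (auto simp: gap_adj_def)
  then have "c (Z i j) \<noteq> c (C j)"
    using tri[of "Z i j" "C j" "D j"] ij by (auto simp: gap_adj_def)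
  then have "c (Z i j) = c (A j)"
    using tri[of "Z i j" "A j" "C j"] ij C by (auto simp: gap_adj_def)
  then show ?thesis
    using pair[of i] tri[of "Z i j" "A i" "B i"] ij by (auto simp: gap_adj_def)
qed

lemma hub_colors_equal_many_colors:
  assumes w: "worm_coloring V (gap_adj N) c" and eq: "c X = c Y"
  shows "Suc N \<le> card (c ` gap_vertices N)"
proof -
  note distinct = hub_colors_equal_pairs_distinct[OF w eq]
  have "inj_on (\<lambda>j. c (A j)) {..<N}"
  proof (rule inj_onI)
    fix i j assume "i \<in> {..<N}" "j \<in> {..<N}" "c (A i) = c (A j)"
    then show "i = j" using distinct[of i j] distinct[of j i] by (cases i j rule: linorder_cases) auto
  qed
  moreover have "c X \<notin> (\<lambda>j. c (A j)) ` {..<N}"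
    using hub_colors_equal_pair[OF w eq] by (metis imageE lessThan_iff)
  ultimately have "card (insert (c X) ((\<lambda>j. c (A j)) ` {..<N})) = Suc N"
    by (simp add: card_image)
  moreover have "insert (c X) ((\<lambda>j. c (A j)) ` {..<N}) \<subseteq> c ` gap_vertices N"
    unfolding gap_vertices_def by auto
  ultimately show ?thesis
    using card_mono[OF finite_imageI[OF finite_gap_vertices]] by metis
qed

lemma gap_feasible_subset: "worm_feasible (gap_vertices N) (gap_adj N) \<subseteq> {..2} \<union> {Suc N..}"
proof
  fix s assume "s \<in> worm_feasible (gap_vertices N) (gap_adj N)"
  then obtain c where w: "worm_coloring (gap_vertices N) (gap_adj N) c"
    and s: "s = card (c ` gap_vertices N)"
    by (auto simp: worm_feasible_def num_colors_def)
  show "s \<in> {..2} \<union> {Suc N..}"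
  proof (cases "c X = c Y")
    case True
    then show ?thesis using hub_colors_equal_many_colors[OF w] s by simp
  next
    case False
    have "s \<le> card {c X, c Y}"
      unfolding s using hub_colors_distinct_two_colors[OF w False] by (intro card_mono) auto
    also have "\<dots> \<le> 2" by (simp add: card_insert_if)
    finally show ?thesis by simp
  qed
qed

fun two_coloring :: "vertex \<Rightarrow> nat" where
  "two_coloring X = 0" | "two_coloring (A j) = 0" | "two_coloring (C j) = 0"
| "two_coloring _ = 1"

fun pair_coloring :: "vertex \<Rightarrow> nat" where
  "pair_coloring (A j) = Suc j" | "pair_coloring (B j) = Suc j" | "pair_coloring (Z i j) = Suc j"
| "pair_coloring _ = 0"

lemma worm_coloring_gapI:
  assumes "\<And>u v w. gap_adj N u v \<Longrightarrow> gap_adj N v w \<Longrightarrow> gap_adj N u w \<Longrightarrow> card {c u, c v, c w} = 2"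
  shows "worm_coloring V (gap_adj N) c"
  using assms by (auto simp: worm_coloring_def Defs.triangle_def)

lemma worm_coloring_two_coloring: "worm_coloring V (gap_adj N) two_coloring"
proof (rule worm_coloring_gapI)
  fix u v w show "gap_adj N u v \<Longrightarrow> gap_adj N v w \<Longrightarrow> gap_adj N u w \<Longrightarrow>
      card {two_coloring u, two_coloring v, two_coloring w} = 2"
    by (cases u; cases v; cases w) (auto simp: gap_adj_def card_three_eq_two_iff)
qed

lemma worm_coloring_pair_coloring: "worm_coloring V (gap_adj N) pair_coloring"
proof (rule worm_coloring_gapI)
  fix u v w show "gap_adj N u v \<Longrightarrow> gap_adj N v w \<Longrightarrow> gap_adj N u w \<Longrightarrow>
      card {pair_coloring u, pair_coloring v, pair_coloring w} = 2"
    by (cases u; cases v; cases w) (auto simp: gap_adj_def card_three_eq_two_iff)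
qed

lemma two_in_gap_feasible: "2 \<in> worm_feasible (gap_vertices N) (gap_adj N)"
proof -
  have "two_coloring ` gap_vertices N = {0, 1}"
    using hub_colors_distinct_two_colors[OF worm_coloring_two_coloring, of N]
    by (auto simp: gap_vertices_def)
  then show ?thesis
    using worm_coloring_two_coloring
    unfolding worm_feasible_def num_colors_def by fastforce
qed

lemma large_in_gap_feasible:
  "\<exists>s\<in>worm_feasible (gap_vertices N) (gap_adj N). Suc N \<le> s"
  using worm_coloring_pair_coloring
    hub_colors_equal_many_colors[OF worm_coloring_pair_coloring, of N]
  unfolding worm_feasible_def num_colors_def by auto

theorem mainTheorem4:
  fixes m :: nat
  assumes "m \<ge> 1"
  shows "\<exists>(V :: nat set) E a. simple_graph V E \<and> worm_colorable V E \<and>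
           worm_min V E < a \<and> a + m - 1 < worm_max V E \<and>
           (\<forall>k\<in>{a..a + m - 1}. k \<notin> worm_feasible V E)"
proof -
  define N where "N = m + 2"
  define V where "V = to_nat ` gap_vertices N"
  define E where "E = map_edges to_nat (gap_adj N)"
  have F: "worm_feasible V E = worm_feasible (gap_vertices N) (gap_adj N)"
    unfolding V_def E_def by (simp add: worm_feasible_map_edges)
  have fin: "finite (worm_feasible V E)"
    unfolding F by (rule finite_worm_feasible[OF finite_gap_vertices])
  obtain s where s: "s \<in> worm_feasible V E" "Suc N \<le> s"
    using large_in_gap_feasible F by metis
  have two: "2 \<in> worm_feasible V E"
    unfolding F by (rule two_in_gap_feasible)
  have "simple_graph V E"
    unfolding V_def E_def by (simp add: simple_graph_map_edges simple_graph_gap)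
  moreover from two have "worm_colorable V E"
    by (auto simp: worm_colorable_iff_feasible_nonempty)
  moreover have "worm_min V E < 3"
    using Min_le[OF fin two] by (simp add: worm_min_def)
  moreover have "3 + m - 1 < worm_max V E"
    using Max_ge[OF fin s(1)] s(2) by (simp add: worm_max_def N_def)
  moreover have "\<forall>k\<in>{3..3 + m - 1}. k \<notin> worm_feasible V E"
    using gap_feasible_subset[of N] by (auto simp: F N_def)
  ultimately show ?thesis by blast
qed

end
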